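(* Let $A\in\mathbb{R}^{l_1\times n}$, let $x^{(2)}_1,\dots,x^{(2)}_{l_2}\in\mathbb{R}^n$ and $x^{(3)}_1,\dots,x^{(3)}_{l_3}\in\mathbb{R}^n$, let $0<\epsilon<1$, $\delta>0$, $A^{*}=(A^TA+\delta I)^{-1}$, and for $p\ge 1$ let $e_p\in\mathbb{R}^p$ be the all-ones vector. For $\lambda>0$ and multipliers $(\alpha_0,\alpha,\beta)\in\mathbb{R}\times[0,1]^{l_2}\times[0,1]^{l_3}$ put $$w_1=-\frac{1}{\lambda}A^{*}\Big(\alpha_0A^Te_{l_1}+\sum_{i=1}^{l_2}\alpha_i x^{(2)}_i+\sum_{k=1}^{l_3}\beta_k x^{(3)}_k\Big),\qquad b_1=\frac{\alpha_0}{\lambda},\qquad f_1(x)=x^Tw_1+b_1 .$$ Let $\lambda\mapsto(\alpha_0(\lambda),\alpha(\lambda),\beta(\lambda))$ be a solution path of the first QPP, i.e. for every $\lambda>0$ it satisfies, with $w_1,b_1,f_1$ built from $(\lambda,\alpha_0(\lambda),\alpha(\lambda),\beta(\lambda))$: (a) $\alpha_i(\lambda)=1$ if $-f_1(x^{(2)}_i)<1$, $\alpha_i(\lambda)=0$ if $-f_1(x^{(2)}_i)>1$, $\alpha_i(\lambda)\in[0,1]$ if $-f_1(x^{(2)}_i)=1$; (b) $\beta_k(\lambda)=1$ if $-f_1(x^{(3)}_k)<1-\epsilon$, $\beta_k(\lambda)=0$ if $-f_1(x^{(3)}_k)>1-\epsilon$, $\beta_k(\lambda)\in[0,1]$ if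 $-f_1(x^{(3)}_k)=1-\epsilon$; (c) $(l_1-e_{l_1}^TAA^{*}A^Te_{l_1})\alpha_0+\sum_{i=1}^{l_2}(1-e_{l_1}^TAA^{*}x^{(2)}_i)\alpha_i+\sum_{k=1}^{l_3}(1-e_{l_1}^TAA^{*}x^{(3)}_k)\beta_k=0$. Let $\lambda^{l}>\lambda^{l+1}>0$ be such that the index sets $\mathcal{E}_B(\lambda)=\{i:-f_1(x^{(2)}_i)=1\}$, $\mathcal{L}_B(\lambda)=\{i:-f_1(x^{(2)}_i)<1\}$, $\mathcal{R}_B(\lambda)=\{i:-f_1(x^{(2)}_i)>1\}$, $\mathcal{E}_C(\lambda)=\{k:-f_1(x^{(3)}_k)=1-\epsilon\}$, $\mathcal{L}_C(\lambda)=\{k:-f_1(x^{(3)}_k)<1-\epsilon\}$, $\mathcal{R}_C(\lambda)=\{k:-f_1(x^{(3)}_k)>1-\epsilon\}$ are constant for $\lambda\in(\lambda^{l+1},\lambda^{l}]$; denote them $\mathcal{E}^{1,l}_B,\mathcal{L}^{1,l}_B,\mathcal{R}^{1,l}_B,\mathcal{E}^{1,l}_C,\mathcal{L}^{1,l}_C,\mathcal{R}^{1,l}_C$, and denote by $\alpha_0^l,\alpha_i^l,\beta_k^l,w_1^l,f_1^l$ the values at $\lambda=\lambda^l$. Let $m_1=|\mathcal{E}^{1,l}_B|$, $m_2=|\mathcal{E}^{1,l}_C|$, let $X_B\in\mathbb{R}^{m_1\times n}$ (resp. $X_C\in\mathbb{R}^{m_2\times n}$) have rows $(x^{(2)}_i)^T$,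 $i\in\mathcal{E}^{1,l}_B$ (resp. $(x^{(3)}_k)^T$, $k\in\mathcal{E}^{1,l}_C$), and define $$\bar A^l=\begin{pmatrix} l_1-e_{l_1}^TAA^{*}A^Te_{l_1} & e_{m_1}^T-e_{l_1}^TAA^{*}X_B^T & e_{m_2}^T-e_{l_1}^TAA^{*}X_C^T\\ -e_{m_1}+X_BA^{*}A^Te_{l_1} & X_BA^{*}X_B^T & X_BA^{*}X_C^T\\ -e_{m_2}+X_CA^{*}A^Te_{l_1} & X_CA^{*}X_B^T & X_CA^{*}X_C^T\end{pmatrix},\qquad \bar b=\begin{pmatrix}0\\ e_{m_1}\\ (1-\epsilon)e_{m_2}\end{pmatrix}.$$ Assume $\bar A^l$ is invertible and write $(\bar A^l)^{-1}\bar b=(\vartheta_0^l,(\vartheta_i^l)_{i\in\mathcal{E}^{1,l}_B},(\nu_k^l)_{k\in\mathcal{E}^{1,l}_C})$ (entries in the order of the rows of $X_B$, $X_C$). Then for every $\lambda$ with $\lambda^{l}>\lambda>\lambda^{l+1}$: $\alpha_0(\lambda)=\alpha_0^l-(\lambda^l-\lambda)\vartheta_0^l$; $\alpha_i(\lambda)=\alpha_i^l-(\lambda^l-\lambda)\vartheta_i^l$ for $i\in\mathcal{E}^{1,l}_B$; $\beta_k(\lambda)=\beta_k^l-(\lambda^l-\lambda)\nu_k^l$ for $k\in\mathcal{E}^{1,l}_C$; so these are piecewise linear in $\lambda$. Moreover $$w_1=\frac{\lambda^l}{\lambda}(w_1^l+h_1^l)-h_1^l,\qquad f_1(x)=\frac{\lambda^l}{\lambda}\big(f_1^l(x)-h_2^l(x)\big)+h_2^l(x),$$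 so $w_1$ and $f_1$ are piecewise linear in $1/\lambda$, where $h_1^l=A^{*}\big(\vartheta_0^lA^Te_{l_1}+\sum_{i\in\mathcal{E}^{1,l}_B}\vartheta_i^lx^{(2)}_i+\sum_{k\in\mathcal{E}^{1,l}_C}\nu_k^lx^{(3)}_k\big)$ and $h_2^l(x)=\vartheta_0^l-x^Th_1^l$.
   Context: This concerns the first of the two quadratic programs of the twin multi-class support vector machine: given class-$+1$ samples (rows of $A$), class-$-1$ samples $x^{(2)}_i$ and remaining samples $x^{(3)}_k$, solve $\min_{w_1,b_1,\xi,\eta}\ \frac{\lambda}{2}\|Aw_1+b_1e_{l_1}\|^2+\sum_i\xi_i+\sum_k\eta_k$ subject to $-(w_1^Tx^{(2)}_i+b_1)+\xi_i\ge 1$, $-(w_1^Tx^{(3)}_k+b_1)+\eta_k\ge 1-\epsilon$, $\xi,\eta\ge 0$, where $\lambda=1/c_1$ is the regularization parameter; $\alpha_i,\beta_k$ are the Lagrange multipliers of the two families of inequality constraints and $\alpha_0=\lambda b_1$. Following the paper, the hyperplane is expressed in terms of the multipliers by the displayed formula for $w_1$ with the regularized inverse $A^{*}$, conditions (a)–(b) are the KKT complementarity relations and (c) is the stationarity condition in $b_1$ combined with that expression for $w_1$. The values $\lambda^l$ are consecutive breakpoints ("events") of the path, i.e. values at which one of the index sets changes. *)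

theory Defs
  imports "Jordan_Normal_Form.Matrix"
begin

text \<open>Vectors of R^p are rendered as Jordan_Normal_Form vectors of dimension p
  ('real vec'), matrices as 'real mat' (dimensions are values, so matrices whose
  size depends on index sets can be formed).\<close>

definition ones :: "nat \<Rightarrow> real vec" where
  "ones p = vec p (\<lambda>_. 1)"

definition ones_col :: "nat \<Rightarrow> real mat" where
  "ones_col p = mat p 1 (\<lambda>_. 1)"

text \<open>Matrix inverse (the two-sided inverse; meaningful for invertible matrices).\<close>
definition mat_inv :: "real mat \<Rightarrow> real mat" where
  "mat_inv M = (SOME B. B \<in> carrier_mat (dim_row M) (dim_row M) \<and> inverts_mat M B \<and> inverts_mat B M)"

definition vsum :: "nat \<Rightarrow> 'i set \<Rightarrow> ('i \<Rightarrow> real vec) \<Rightarrow> real vec" where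
  "vsum n I f = vec n (\<lambda>j. \<Sum>i\<in>I. f i $ j)"

definition Astar :: "real mat \<Rightarrow> real \<Rightarrow> real mat" where
  "Astar A \<delta> = mat_inv (transpose_mat A * A + \<delta> \<cdot>\<^sub>m 1\<^sub>m (dim_col A))"

definition w1 :: "real mat \<Rightarrow> real \<Rightarrow> (nat \<Rightarrow> real vec) \<Rightarrow> nat \<Rightarrow> (nat \<Rightarrow> real vec) \<Rightarrow> nat
    \<Rightarrow> real \<Rightarrow> real \<Rightarrow> (nat \<Rightarrow> real) \<Rightarrow> (nat \<Rightarrow> real) \<Rightarrow> real vec" where
  "w1 A \<delta> x2 l2 x3 l3 lam a0 \<alpha> \<beta> =
     (- (1 / lam)) \<cdot>\<^sub>v (Astar A \<delta> *\<^sub>v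
        (a0 \<cdot>\<^sub>v (transpose_mat A *\<^sub>v ones (dim_row A))
         + vsum (dim_col A) {..<l2} (\<lambda>i. \<alpha> i \<cdot>\<^sub>v x2 i)
         + vsum (dim_col A) {..<l3} (\<lambda>k. \<beta> k \<cdot>\<^sub>v x3 k)))"

definition b1 :: "real \<Rightarrow> real \<Rightarrow> real" where
  "b1 lam a0 = a0 / lam"

definition f1 :: "real mat \<Rightarrow> real \<Rightarrow> (nat \<Rightarrow> real vec) \<Rightarrow> nat \<Rightarrow> (nat \<Rightarrow> real vec) \<Rightarrow> nat
    \<Rightarrow> real \<Rightarrow> real \<Rightarrow> (nat \<Rightarrow> real) \<Rightarrow> (nat \<Rightarrow> real) \<Rightarrow> real vec \<Rightarrow> real" where
  "f1 A \<delta> x2 l2 x3 l3 lam a0 \<alpha> \<beta> x = x \<bullet> w1 A \<delta> x2 l2 x3 l3 lam a0 \<alpha> \<beta> + b1 lam a0"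

definition kkt_QPP1 :: "real mat \<Rightarrow> real \<Rightarrow> real \<Rightarrow> (nat \<Rightarrow> real vec) \<Rightarrow> nat \<Rightarrow> (nat \<Rightarrow> real vec) \<Rightarrow> nat
    \<Rightarrow> real \<Rightarrow> real \<Rightarrow> (nat \<Rightarrow> real) \<Rightarrow> (nat \<Rightarrow> real) \<Rightarrow> bool" where
  "kkt_QPP1 A \<delta> \<epsilon> x2 l2 x3 l3 lam a0 \<alpha> \<beta> \<longleftrightarrow>
     (let F = f1 A \<delta> x2 l2 x3 l3 lam a0 \<alpha> \<beta>; l1 = dim_row A; As = Astar A \<delta> in
       (\<forall>i<l2. \<alpha> i \<in> {0..1}) \<and> (\<forall>k<l3. \<beta> k \<in> {0..1}) \<and>
       (\<forall>i<l2. (- F (x2 i) < 1 \<longrightarrow> \<alpha> i = 1) \<and> (- F (x2 i) > 1 \<longrightarrow> \<alpha> i = 0)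
               \<and> (- F (x2 i) = 1 \<longrightarrow> \<alpha> i \<in> {0..1})) \<and>
       (\<forall>k<l3. (- F (x3 k) < 1 - \<epsilon> \<longrightarrow> \<beta> k = 1) \<and> (- F (x3 k) > 1 - \<epsilon> \<longrightarrow> \<beta> k = 0)
               \<and> (- F (x3 k) = 1 - \<epsilon> \<longrightarrow> \<beta> k \<in> {0..1})) \<and>
       (real l1 - ones l1 \<bullet> (A *\<^sub>v (As *\<^sub>v (transpose_mat A *\<^sub>v ones l1)))) * a0
        + (\<Sum>i<l2. (1 - ones l1 \<bullet> (A *\<^sub>v (As *\<^sub>v x2 i))) * \<alpha> i)
        + (\<Sum>k<l3. (1 - ones l1 \<bullet> (A *\<^sub>v (As *\<^sub>v x3 k))) * \<beta> k) = 0)"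

definition E_B :: "(real vec \<Rightarrow> real) \<Rightarrow> (nat \<Rightarrow> real vec) \<Rightarrow> nat \<Rightarrow> nat set" where
  "E_B F x2 l2 = {i. i < l2 \<and> - F (x2 i) = 1}"
definition L_B :: "(real vec \<Rightarrow> real) \<Rightarrow> (nat \<Rightarrow> real vec) \<Rightarrow> nat \<Rightarrow> nat set" where
  "L_B F x2 l2 = {i. i < l2 \<and> - F (x2 i) < 1}"
definition R_B :: "(real vec \<Rightarrow> real) \<Rightarrow> (nat \<Rightarrow> real vec) \<Rightarrow> nat \<Rightarrow> nat set" where
  "R_B F x2 l2 = {i. i < l2 \<and> - F (x2 i) > 1}"
definition E_C :: "real \<Rightarrow> (real vec \<Rightarrow> real) \<Rightarrow> (nat \<Rightarrow> real vec) \<Rightarrow> nat \<Rightarrow> nat set" where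
  "E_C \<epsilon> F x3 l3 = {k. k < l3 \<and> - F (x3 k) = 1 - \<epsilon>}"
definition L_C :: "real \<Rightarrow> (real vec \<Rightarrow> real) \<Rightarrow> (nat \<Rightarrow> real vec) \<Rightarrow> nat \<Rightarrow> nat set" where
  "L_C \<epsilon> F x3 l3 = {k. k < l3 \<and> - F (x3 k) < 1 - \<epsilon>}"
definition R_C :: "real \<Rightarrow> (real vec \<Rightarrow> real) \<Rightarrow> (nat \<Rightarrow> real vec) \<Rightarrow> nat \<Rightarrow> nat set" where
  "R_C \<epsilon> F x3 l3 = {k. k < l3 \<and> - F (x3 k) > 1 - \<epsilon>}"

definition hcat :: "real mat \<Rightarrow> real mat \<Rightarrow> real mat" where
  "hcat M N = four_block_mat M N (0\<^sub>m 0 (dim_col M)) (0\<^sub>m 0 (dim_col N))"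

definition Abar :: "real mat \<Rightarrow> real \<Rightarrow> real mat \<Rightarrow> real mat \<Rightarrow> real mat" where
  "Abar A \<delta> XB XC =
    (let l1 = dim_row A; m1 = dim_row XB; m2 = dim_row XC; As = Astar A \<delta>;
         E = ones_col l1; eT = transpose_mat E; E1 = ones_col m1; E2 = ones_col m2;
         AT = transpose_mat A; XBT = transpose_mat XB; XCT = transpose_mat XC in
      hcat (mat 1 1 (\<lambda>_. real l1) - eT * A * As * AT * E)
           (hcat (transpose_mat E1 - eT * A * As * XBT) (transpose_mat E2 - eT * A * As * XCT))
      @\<^sub>r
      hcat (- E1 + XB * As * AT * E) (hcat (XB * As * XBT) (XB * As * XCT))
      @\<^sub>r
      hcat (- E2 + XC * As * AT * E) (hcat (XC * As * XBT) (XC * As * XCT)))"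

definition bbar :: "real \<Rightarrow> nat \<Rightarrow> nat \<Rightarrow> real vec" where
  "bbar \<epsilon> m1 m2 = vec 1 (\<lambda>_. 0) @\<^sub>v ones m1 @\<^sub>v ((1 - \<epsilon>) \<cdot>\<^sub>v ones m2)"

end

theory Submission
  imports Defs "Jordan_Normal_Form.Determinant"
begin

(* On (lambda^{l+1}, lambda^l] the index sets are frozen, so by (a) and (b) every multiplier
   outside E_B and E_C keeps its value 0 or 1 along the segment.  Write w_1 = -(1/lambda) A^* S,
   where S is the multiplier combination of A^T e, the x^(2)_i and the x^(3)_k.  Condition (c) and
   the active margins x^T A^* S - alpha_0 = lambda (resp. lambda (1 - epsilon)) are linear in the
   active coordinates (alpha_0, alpha on E_B, beta on E_C), and their coefficient matrix is Abar.
   Subtracting these systems at lambda and at lambda^l shows that the change d of the active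
   coordinates solves Abar d = (lambda - lambda^l) bbar, so d = (lambda - lambda^l) Abar^-1 bbar.
   Hence alpha_0 and S are affine in lambda, and w_1 and f_1 = (alpha_0 - x^T A^* S) / lambda are
   affine in 1/lambda. *)

lemma row_mult_scalar_prod:
  assumes "i < dim_row P" "dim_col P = dim_row Q" "dim_vec v = dim_col Q"
  shows "row (P * Q) i \<bullet> v = row P i \<bullet> (Q *\<^sub>v v)"
proof -
  have "row (P * Q) i = vec (dim_col Q) (\<lambda>j. row P i \<bullet> col Q j)"
    using assms by (intro row_mult) (auto intro: carrier_matI)
  also have "\<dots> \<bullet> v = row P i \<bullet> vec (dim_row Q) (\<lambda>k. row Q k \<bullet> v)"
    using assms by (intro assoc_scalar_prod) (auto intro: carrier_matI carrier_vecI)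
  finally show ?thesis by (simp add: mult_mat_vec_def)
qed

lemma col_mult_eq_mult_mat_vec:
  assumes "j < dim_col R" "dim_col Q = dim_row R"
  shows "col (Q * R) j = Q *\<^sub>v col R j"
  using assms by (intro col_mult2) (auto intro: carrier_matI)

lemma index_mult_mat_vec_sum:
  "M \<in> carrier_mat k k' \<Longrightarrow> v \<in> carrier_vec k' \<Longrightarrow> r < k \<Longrightarrow> (M *\<^sub>v v) $ r = (\<Sum>c<k'. M $$ (r, c) * v $ c)"
  by (auto simp: scalar_prod_def atLeast0LessThan intro!: sum.cong)

lemma index_hcat:
  "i < dim_row M \<Longrightarrow> j < dim_col M + dim_col N \<Longrightarrow>
    hcat M N $$ (i, j) = (if j < dim_col M then M $$ (i, j) else N $$ (i, j - dim_col M))"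
  "dim_row (hcat M N) = dim_row M" "dim_col (hcat M N) = dim_col M + dim_col N"
  unfolding hcat_def by simp_all

lemma index_append_rows:
  "i < dim_row M + dim_row N \<Longrightarrow> j < dim_col M \<Longrightarrow>
    (M @\<^sub>r N) $$ (i, j) = (if i < dim_row M then M $$ (i, j) else N $$ (i - dim_row M, j))"
  "dim_row (M @\<^sub>r N) = dim_row M + dim_row N" "dim_col (M @\<^sub>r N) = dim_col M"
  unfolding append_rows_def by simp_all

lemma invertible_mat_if_trivial_kernel:
  fixes M :: "'a :: field mat"
  assumes M: "M \<in> carrier_mat n n" and ker: "\<And>v. v \<in> carrier_vec n \<Longrightarrow> M *\<^sub>v v = 0\<^sub>v n \<Longrightarrow> v = 0\<^sub>v n"
  shows "invertible_mat M"
proof -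
  have "det M \<noteq> 0"
    using ker det_0_iff_vec_prod_zero_field[OF M] by blast
  then obtain B where "B \<in> carrier_mat n n" "B * M = 1\<^sub>m n" "M * B = 1\<^sub>m n"
    using det_non_zero_imp_unit[OF M, of "()"] unfolding Units_def ring_mat_def by auto
  then show ?thesis
    using M unfolding invertible_mat_def inverts_mat_def square_mat.simps by auto
qed

lemma smult_one_mat_mult_vec:
  "v \<in> carrier_vec n \<Longrightarrow> (k \<cdot>\<^sub>m 1\<^sub>m n) *\<^sub>v v = (k :: 'a :: comm_ring_1) \<cdot>\<^sub>v v"
  by (intro eq_vecI) auto

lemma regularized_gram_invertible:
  fixes A :: "real mat"
  assumes A: "A \<in> carrier_mat m n" and \<delta>: "0 < \<delta>"
  shows "invertible_mat (transpose_mat A * A + \<delta> \<cdot>\<^sub>m 1\<^sub>m n)"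
proof (rule invertible_mat_if_trivial_kernel)
  show "transpose_mat A * A + \<delta> \<cdot>\<^sub>m 1\<^sub>m n \<in> carrier_mat n n" using A by simp
  fix v assume v: "v \<in> carrier_vec n" and "(transpose_mat A * A + \<delta> \<cdot>\<^sub>m 1\<^sub>m n) *\<^sub>v v = 0\<^sub>v n"
  then have "transpose_mat A *\<^sub>v (A *\<^sub>v v) + \<delta> \<cdot>\<^sub>v v = 0\<^sub>v n"
    using A by (simp add: add_mult_distrib_mat_vec[of _ n n] smult_one_mat_mult_vec)
  then have "0 = v \<bullet> (transpose_mat A *\<^sub>v (A *\<^sub>v v) + \<delta> \<cdot>\<^sub>v v)"
    using v by simp
  also have "\<dots> = v \<bullet> (transpose_mat A *\<^sub>v (A *\<^sub>v v)) + \<delta> * (v \<bullet> v)"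
    using A v by (subst scalar_prod_add_distrib[of _ n]) auto
  also have "v \<bullet> (transpose_mat A *\<^sub>v (A *\<^sub>v v)) = (transpose_mat A *\<^sub>v (A *\<^sub>v v)) \<bullet> v"
    by (rule comm_scalar_prod[of _ n]) (use A v in auto)
  also have "\<dots> = (A *\<^sub>v v) \<bullet> (A *\<^sub>v v)"
    by (rule transpose_vec_mult_scalar[of _ m n]) (use A v in auto)
  finally have "\<delta> * (v \<bullet> v) \<le> 0"
    using conjugate_square_ge_0_vec[of "A *\<^sub>v v"] by simp
  then have "v \<bullet> v \<le> 0"
    using \<delta> by (simp add: mult_le_0_iff)
  then show "v = 0\<^sub>v n"
    using v \<delta> conjugate_square_greater_0_vec[OF v] by auto
qed

lemma mat_inv_inverts:
  assumes "invertible_mat M"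
  shows "mat_inv M \<in> carrier_mat (dim_row M) (dim_row M)" "mat_inv M * M = 1\<^sub>m (dim_row M)"
proof -
  obtain B where B: "inverts_mat M B" "inverts_mat B M" and sq: "square_mat M"
    using assms unfolding invertible_mat_def by blast
  then have "B \<in> carrier_mat (dim_row M) (dim_row M)"
    unfolding inverts_mat_def by (metis carrier_matI index_mult_mat(3) index_one_mat(3) square_mat.simps)
  with B have "\<exists>B. B \<in> carrier_mat (dim_row M) (dim_row M) \<and> inverts_mat M B \<and> inverts_mat B M"
    by blast
  from someI_ex[OF this] show "mat_inv M \<in> carrier_mat (dim_row M) (dim_row M)" "mat_inv M * M = 1\<^sub>m (dim_row M)"
    unfolding mat_inv_def inverts_mat_def by auto
qed

lemma mat_inv_mult_vec_unique:
  assumes "invertible_mat M" "M \<in> carrier_mat k k" "d \<in> carrier_vec k" "M *\<^sub>v d = b"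
  shows "d = mat_inv M *\<^sub>v b"
proof -
  have "d = (mat_inv M * M) *\<^sub>v d"
    using assms mat_inv_inverts[OF assms(1)] by simp
  also have "\<dots> = mat_inv M *\<^sub>v b"
    using assms mat_inv_inverts[OF assms(1)] by (metis assoc_mult_mat_vec carrier_matD(1))
  finally show ?thesis .
qed

lemma Astar_carrier: "0 < \<delta> \<Longrightarrow> Astar A \<delta> \<in> carrier_mat (dim_col A) (dim_col A)"
  using mat_inv_inverts(1)[OF regularized_gram_invertible[of A "dim_row A" "dim_col A" \<delta>]]
  by (simp add: Astar_def)

lemma vsum_carrier [simp]: "vsum n I f \<in> carrier_vec n" "dim_vec (vsum n I f) = n"
  by (simp_all add: vsum_def)

lemma index_vsum [simp]: "j < n \<Longrightarrow> vsum n I f $ j = (\<Sum>i\<in>I. f i $ j)"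
  by (simp add: vsum_def)

lemma scalar_prod_mult_mat_vec_vsum:
  fixes M :: "real mat"
  assumes M: "M \<in> carrier_mat k n" and y: "\<And>i. i \<in> I \<Longrightarrow> y i \<in> carrier_vec n"
  shows "p \<bullet> (M *\<^sub>v vsum n I (\<lambda>i. c i \<cdot>\<^sub>v y i)) = (\<Sum>i\<in>I. c i * (p \<bullet> (M *\<^sub>v y i)))"
proof -
  have dims: "dim_vec (y i) = n" if "i \<in> I" for i
    using y[OF that] by simp
  have expand: "p \<bullet> (M *\<^sub>v v) = (\<Sum>r<k. \<Sum>j<n. p $ r * M $$ (r, j) * v $ j)" if "v \<in> carrier_vec n" for v
    using M that by (auto simp: scalar_prod_def atLeast0LessThan sum_distrib_left mult.assoc intro!: sum.cong)
  have "p \<bullet> (M *\<^sub>v vsum n I (\<lambda>i. c i \<cdot>\<^sub>v y i)) = (\<Sum>r<k. \<Sum>j<n. \<Sum>i\<in>I. c i * (p $ r * M $$ (r, j) * y i $ j))"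
    using y by (auto simp: expand sum_distrib_left mult_ac dims intro!: sum.cong)
  also have "\<dots> = (\<Sum>r<k. \<Sum>i\<in>I. \<Sum>j<n. c i * (p $ r * M $$ (r, j) * y i $ j))"
    by (rule sum.cong[OF refl], rule sum.swap)
  also have "\<dots> = (\<Sum>i\<in>I. \<Sum>r<k. \<Sum>j<n. c i * (p $ r * M $$ (r, j) * y i $ j))"
    by (rule sum.swap)
  also have "\<dots> = (\<Sum>i\<in>I. c i * (\<Sum>r<k. \<Sum>j<n. p $ r * M $$ (r, j) * y i $ j))"
    by (simp add: sum_distrib_left)
  also have "\<dots> = (\<Sum>i\<in>I. c i * (p \<bullet> (M *\<^sub>v y i)))"
    using y by (simp add: expand)
  finally show ?thesis .
qed

lemma sum_lessThan_Suc_add: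
  "(\<Sum>c<Suc (m1 + m2). f c) = f 0 + (\<Sum>j<m1. f (Suc j)) + (\<Sum>j<m2. f (Suc (m1 + j)))"
proof (induction m2)
  case 0
  show ?case using sum.lessThan_Suc_shift[of f m1] by simp
next
  case (Suc m2)
  then show ?case by (simp add: add.assoc)
qed

lemma sum_lessThan_eq_sum_nth:
  fixes xs :: "nat list"
  assumes "distinct xs" "set xs \<subseteq> {..<l}" "\<And>i. i < l \<Longrightarrow> i \<notin> set xs \<Longrightarrow> f i = 0"
  shows "(\<Sum>i<l. f i) = (\<Sum>t<length xs. f (xs ! t))"
proof -
  have "(\<Sum>i<l. f i) = (\<Sum>i\<in>set xs. f i)"
    using assms by (intro sum.mono_neutral_right) auto
  also have "\<dots> = (\<Sum>t<length xs. f (xs ! t))"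
    using sum.reindex_bij_betw[OF bij_betw_nth[of xs "{..<length xs}" "set xs"], of f] assms(1)
    by simp
  finally show ?thesis .
qed

lemma ones_col_simps [simp]:
  "dim_row (ones_col p) = p" "dim_col (ones_col p) = 1"
  "i < p \<Longrightarrow> ones_col p $$ (i, 0) = 1" "col (ones_col p) 0 = ones p"
  "dim_vec (ones p) = p"
  by (auto simp: ones_col_def ones_def)

lemma bbar_carrier: "bbar \<epsilon> m1 m2 \<in> carrier_vec (Suc (m1 + m2))" "dim_vec (bbar \<epsilon> m1 m2) = Suc (m1 + m2)"
  by (simp_all add: bbar_def ones_def carrier_vecI)

lemma index_bbar: "r < Suc (m1 + m2) \<Longrightarrow>
    bbar \<epsilon> m1 m2 $ r = (if r = 0 then 0 else if r \<le> m1 then 1 else 1 - \<epsilon>)"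
  by (auto simp: bbar_def ones_def)

section \<open>The first QPP and its KKT conditions\<close>

locale qpp1 =
  fixes A :: "real mat" and \<delta> \<epsilon> :: real and x2 x3 :: "nat \<Rightarrow> real vec" and l2 l3 :: nat
  assumes delta_pos: "0 < \<delta>"
    and x2_carrier: "i < l2 \<Longrightarrow> x2 i \<in> carrier_vec (dim_col A)"
    and x3_carrier: "k < l3 \<Longrightarrow> x3 k \<in> carrier_vec (dim_col A)"
begin

abbreviation n :: nat where "n \<equiv> dim_col A"
abbreviation l1 :: nat where "l1 \<equiv> dim_row A"
abbreviation As :: "real mat" where "As \<equiv> Astar A \<delta>"
abbreviation u :: "real vec" where "u \<equiv> transpose_mat A *\<^sub>v ones l1"

abbreviation f :: "real \<Rightarrow> real \<Rightarrow> (nat \<Rightarrow> real) \<Rightarrow> (nat \<Rightarrow> real) \<Rightarrow> real vec \<Rightarrow> real" where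
  "f \<equiv> f1 A \<delta> x2 l2 x3 l3"

abbreviation kkt :: "real \<Rightarrow> real \<Rightarrow> (nat \<Rightarrow> real) \<Rightarrow> (nat \<Rightarrow> real) \<Rightarrow> bool" where
  "kkt \<equiv> kkt_QPP1 A \<delta> \<epsilon> x2 l2 x3 l3"

lemma As_carrier [simp]: "As \<in> carrier_mat n n" "dim_row As = n" "dim_col As = n"
  using Astar_carrier[OF delta_pos] by auto

lemma As_mult_vec_carrier [simp]: "As *\<^sub>v v \<in> carrier_vec n"
  by (rule carrier_vecI) simp

lemma u_carrier [simp]: "u \<in> carrier_vec n"
  by (rule mult_mat_vec_carrier[of _ n l1]) (auto simp: ones_def)

lemma x2_dim [simp]: "i < l2 \<Longrightarrow> dim_vec (x2 i) = n"
  using x2_carrier by auto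

lemma x3_dim [simp]: "k < l3 \<Longrightarrow> dim_vec (x3 k) = n"
  using x3_carrier by auto

lemma ones_scalar_prod_mult_mat_vec: "dim_vec w = n \<Longrightarrow> ones l1 \<bullet> (A *\<^sub>v w) = u \<bullet> w"
  by (rule transpose_vec_mult_scalar[symmetric, of _ l1 n]) (auto simp: ones_def intro!: carrier_vecI carrier_matI)

definition dual_sum :: "real \<Rightarrow> (nat \<Rightarrow> real) \<Rightarrow> (nat \<Rightarrow> real) \<Rightarrow> real vec" where
  "dual_sum a0 \<alpha> \<beta> = a0 \<cdot>\<^sub>v u + vsum n {..<l2} (\<lambda>i. \<alpha> i \<cdot>\<^sub>v x2 i) + vsum n {..<l3} (\<lambda>k. \<beta> k \<cdot>\<^sub>v x3 k)"

lemma dual_sum_carrier [simp]: "dual_sum a0 \<alpha> \<beta> \<in> carrier_vec n"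
  by (simp add: dual_sum_def)

lemma w1_eq: "w1 A \<delta> x2 l2 x3 l3 lam a0 \<alpha> \<beta> = (- (1 / lam)) \<cdot>\<^sub>v (As *\<^sub>v dual_sum a0 \<alpha> \<beta>)"
  unfolding w1_def dual_sum_def ..

lemma f1_eq:
  assumes "x \<in> carrier_vec n" "lam \<noteq> 0"
  shows "f lam a0 \<alpha> \<beta> x = (a0 - x \<bullet> (As *\<^sub>v dual_sum a0 \<alpha> \<beta>)) / lam"
  using assms by (simp add: f1_def b1_def w1_eq field_simps)

lemma scalar_prod_As_dual_sum:
  assumes q: "q \<in> carrier_vec n"
  shows "q \<bullet> (As *\<^sub>v dual_sum a0 \<alpha> \<beta>) = a0 * (q \<bullet> (As *\<^sub>v u))
    + (\<Sum>i<l2. \<alpha> i * (q \<bullet> (As *\<^sub>v x2 i))) + (\<Sum>k<l3. \<beta> k * (q \<bullet> (As *\<^sub>v x3 k)))"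
proof -
  have "q \<bullet> (As *\<^sub>v dual_sum a0 \<alpha> \<beta>) = q \<bullet> (As *\<^sub>v (a0 \<cdot>\<^sub>v u)) + q \<bullet> (As *\<^sub>v vsum n {..<l2} (\<lambda>i. \<alpha> i \<cdot>\<^sub>v x2 i))
      + q \<bullet> (As *\<^sub>v vsum n {..<l3} (\<lambda>k. \<beta> k \<cdot>\<^sub>v x3 k))"
    using q by (simp add: dual_sum_def mult_add_distrib_mat_vec[of _ n n] scalar_prod_add_distrib[of _ n])
  moreover have "q \<bullet> (As *\<^sub>v vsum n {..<l2} (\<lambda>i. \<alpha> i \<cdot>\<^sub>v x2 i)) = (\<Sum>i<l2. \<alpha> i * (q \<bullet> (As *\<^sub>v x2 i)))"
    by (rule scalar_prod_mult_mat_vec_vsum[OF As_carrier(1)]) (simp add: x2_carrier)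
  moreover have "q \<bullet> (As *\<^sub>v vsum n {..<l3} (\<lambda>k. \<beta> k \<cdot>\<^sub>v x3 k)) = (\<Sum>k<l3. \<beta> k * (q \<bullet> (As *\<^sub>v x3 k)))"
    by (rule scalar_prod_mult_mat_vec_vsum[OF As_carrier(1)]) (simp add: x3_carrier)
  ultimately show ?thesis
    using q by (simp add: mult_mat_vec[of _ n n])
qed

lemma kkt_stationarity:
  assumes "kkt lam a0 \<alpha> \<beta>"
  shows "real l1 * a0 + (\<Sum>i<l2. \<alpha> i) + (\<Sum>k<l3. \<beta> k) = u \<bullet> (As *\<^sub>v dual_sum a0 \<alpha> \<beta>)"
proof -
  have "(real l1 - u \<bullet> (As *\<^sub>v u)) * a0 + (\<Sum>i<l2. (1 - u \<bullet> (As *\<^sub>v x2 i)) * \<alpha> i)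
      + (\<Sum>k<l3. (1 - u \<bullet> (As *\<^sub>v x3 k)) * \<beta> k) = 0"
    using assms by (simp add: kkt_QPP1_def Let_def ones_scalar_prod_mult_mat_vec)
  then show ?thesis
    by (simp add: scalar_prod_As_dual_sum algebra_simps sum_subtractf sum.distrib)
qed

lemma kkt_alpha:
  "kkt lam a0 \<alpha> \<beta> \<Longrightarrow> i < l2 \<Longrightarrow>
    (- f lam a0 \<alpha> \<beta> (x2 i) < 1 \<longrightarrow> \<alpha> i = 1) \<and> (- f lam a0 \<alpha> \<beta> (x2 i) > 1 \<longrightarrow> \<alpha> i = 0)"
  by (simp add: kkt_QPP1_def Let_def)

lemma kkt_beta:
  "kkt lam a0 \<alpha> \<beta> \<Longrightarrow> k < l3 \<Longrightarrow>
    (- f lam a0 \<alpha> \<beta> (x3 k) < 1 - \<epsilon> \<longrightarrow> \<beta> k = 1) \<and> (- f lam a0 \<alpha> \<beta> (x3 k) > 1 - \<epsilon> \<longrightarrow> \<beta> k = 0)"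
  by (simp add: kkt_QPP1_def Let_def)

definition same_index_sets :: "(real vec \<Rightarrow> real) \<Rightarrow> (real vec \<Rightarrow> real) \<Rightarrow> bool" where
  "same_index_sets F G \<longleftrightarrow>
     E_B F x2 l2 = E_B G x2 l2 \<and> L_B F x2 l2 = L_B G x2 l2 \<and> R_B F x2 l2 = R_B G x2 l2 \<and>
     E_C \<epsilon> F x3 l3 = E_C \<epsilon> G x3 l3 \<and> L_C \<epsilon> F x3 l3 = L_C \<epsilon> G x3 l3 \<and> R_C \<epsilon> F x3 l3 = R_C \<epsilon> G x3 l3"

lemma kkt_inactive_alpha_eq:
  assumes "kkt lam a0 \<alpha> \<beta>" "kkt mu a0' \<alpha>' \<beta>'" "same_index_sets (f lam a0 \<alpha> \<beta>) (f mu a0' \<alpha>' \<beta>')"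
    and "i < l2" "i \<notin> E_B (f mu a0' \<alpha>' \<beta>') x2 l2"
  shows "\<alpha> i = \<alpha>' i"
proof (cases "- f mu a0' \<alpha>' \<beta>' (x2 i) < 1")
  case True
  then have "i \<in> L_B (f lam a0 \<alpha> \<beta>) x2 l2"
    using assms(3,4) by (simp add: same_index_sets_def L_B_def)
  with True show ?thesis
    using kkt_alpha[OF assms(1,4)] kkt_alpha[OF assms(2,4)] by (simp add: L_B_def)
next
  case False
  then have "- f mu a0' \<alpha>' \<beta>' (x2 i) > 1"
    using assms(4,5) by (simp add: E_B_def)
  moreover from this have "i \<in> R_B (f lam a0 \<alpha> \<beta>) x2 l2"
    using assms(3,4) by (simp add: same_index_sets_def R_B_def)
  ultimately show ?thesis
    using kkt_alpha[OF assms(1,4)] kkt_alpha[OF assms(2,4)] by (simp add: R_B_def)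
qed

lemma kkt_inactive_beta_eq:
  assumes "kkt lam a0 \<alpha> \<beta>" "kkt mu a0' \<alpha>' \<beta>'" "same_index_sets (f lam a0 \<alpha> \<beta>) (f mu a0' \<alpha>' \<beta>')"
    and "k < l3" "k \<notin> E_C \<epsilon> (f mu a0' \<alpha>' \<beta>') x3 l3"
  shows "\<beta> k = \<beta>' k"
proof (cases "- f mu a0' \<alpha>' \<beta>' (x3 k) < 1 - \<epsilon>")
  case True
  then have "k \<in> L_C \<epsilon> (f lam a0 \<alpha> \<beta>) x3 l3"
    using assms(3,4) by (simp add: same_index_sets_def L_C_def)
  with True show ?thesis
    using kkt_beta[OF assms(1,4)] kkt_beta[OF assms(2,4)] by (simp add: L_C_def)
next
  case False
  then have "- f mu a0' \<alpha>' \<beta>' (x3 k) > 1 - \<epsilon>"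
    using assms(4,5) by (simp add: E_C_def)
  moreover from this have "k \<in> R_C \<epsilon> (f lam a0 \<alpha> \<beta>) x3 l3"
    using assms(3,4) by (simp add: same_index_sets_def R_C_def)
  ultimately show ?thesis
    using kkt_beta[OF assms(1,4)] kkt_beta[OF assms(2,4)] by (simp add: R_C_def)
qed

section \<open>The linear system on the active set\<close>

(* The vectors A^T e, x^(2)_i (i in EB), x^(3)_k (k in EC) in the order of the rows of Abar;
   Abar_index shows that Abar is their bordered Gram matrix with respect to A^*. *)
definition active_point :: "nat list \<Rightarrow> nat list \<Rightarrow> nat \<Rightarrow> real vec" where
  "active_point EB EC c = (if c = 0 then u else if c \<le> length EB then x2 (EB ! (c - 1))
     else x3 (EC ! (c - Suc (length EB))))"

lemma active_point_carrier:
  assumes "set EB \<subseteq> {..<l2}" "set EC \<subseteq> {..<l3}" "c < Suc (length EB + length EC)"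
  shows "active_point EB EC c \<in> carrier_vec n"
  using assms x2_carrier x3_carrier by (auto simp: active_point_def subset_iff)

lemma nth_x2_carrier:
  "set EB \<subseteq> {..<l2} \<Longrightarrow> t < length EB \<Longrightarrow> x2 (EB ! t) \<in> carrier_vec n"
  "set EB \<subseteq> {..<l2} \<Longrightarrow> t < length EB \<Longrightarrow> dim_vec (x2 (EB ! t)) = n"
  using x2_carrier by (auto simp: subset_iff)

lemma nth_x3_carrier:
  "set EC \<subseteq> {..<l3} \<Longrightarrow> t < length EC \<Longrightarrow> x3 (EC ! t) \<in> carrier_vec n"
  "set EC \<subseteq> {..<l3} \<Longrightarrow> t < length EC \<Longrightarrow> dim_vec (x3 (EC ! t)) = n"
  using x3_carrier by (auto simp: subset_iff)

lemma Abar_index: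
  assumes EB: "set EB \<subseteq> {..<l2}" and EC: "set EC \<subseteq> {..<l3}"
    and r: "r < Suc (length EB + length EC)" and c: "c < Suc (length EB + length EC)"
  shows "Abar A \<delta> (mat_of_rows n (map x2 EB)) (mat_of_rows n (map x3 EC)) $$ (r, c) =
    (if r = 0 then (if c = 0 then real l1 else 1) - u \<bullet> (As *\<^sub>v active_point EB EC c)
     else (if c = 0 then -1 else 0) + active_point EB EC r \<bullet> (As *\<^sub>v active_point EB EC c))"
proof -
  have row_B: "row (mat_of_rows n (map x2 EB)) t = x2 (EB ! t)" if "t < length EB" for t
    using that nth_x2_carrier[OF EB] by simp
  have row_C: "row (mat_of_rows n (map x3 EC)) t = x3 (EC ! t)" if "t < length EC" for t
    using that nth_x3_carrier[OF EC] by simp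
  show ?thesis
    using r c
    by (auto simp: Abar_def Let_def index_hcat index_append_rows row_mult_scalar_prod
        col_mult_eq_mult_mat_vec active_point_def row_B row_C nth_x2_carrier[OF EB] nth_x3_carrier[OF EC]
        ones_scalar_prod_mult_mat_vec del: row_mult col_mult)
qed

lemma Abar_dim:
  "dim_row (Abar A \<delta> (mat_of_rows n (map x2 EB)) (mat_of_rows n (map x3 EC))) = Suc (length EB + length EC)"
  "dim_col (Abar A \<delta> (mat_of_rows n (map x2 EB)) (mat_of_rows n (map x3 EC))) = Suc (length EB + length EC)"
  by (simp_all add: Abar_def Let_def index_hcat index_append_rows)

lemma Abar_carrier:
  "Abar A \<delta> (mat_of_rows n (map x2 EB)) (mat_of_rows n (map x3 EC))
     \<in> carrier_mat (Suc (length EB + length EC)) (Suc (length EB + length EC))"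
  by (rule carrier_matI) (simp_all add: Abar_dim)

definition active_comb :: "nat list \<Rightarrow> nat list \<Rightarrow> real vec \<Rightarrow> real vec" where
  "active_comb EB EC p = p $ 0 \<cdot>\<^sub>v u
     + vsum n {..<length EB} (\<lambda>j. p $ (1 + j) \<cdot>\<^sub>v x2 (EB ! j))
     + vsum n {..<length EC} (\<lambda>j. p $ (1 + length EB + j) \<cdot>\<^sub>v x3 (EC ! j))"

lemma active_comb_carrier [simp]: "active_comb EB EC p \<in> carrier_vec n" "dim_vec (active_comb EB EC p) = n"
  by (simp_all add: active_comb_def)

lemma active_comb_eq_vsum:
  assumes EB: "set EB \<subseteq> {..<l2}" and EC: "set EC \<subseteq> {..<l3}"
  shows "active_comb EB EC p =
    vsum n {..<Suc (length EB + length EC)} (\<lambda>c. p $ c \<cdot>\<^sub>v active_point EB EC c)"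
proof (rule eq_vecI)
  fix j assume "j < dim_vec (vsum n {..<Suc (length EB + length EC)} (\<lambda>c. p $ c \<cdot>\<^sub>v active_point EB EC c))"
  then have j: "j < n" by simp
  have "vsum n {..<Suc (length EB + length EC)} (\<lambda>c. p $ c \<cdot>\<^sub>v active_point EB EC c) $ j
      = (\<Sum>c<Suc (length EB + length EC). (p $ c \<cdot>\<^sub>v active_point EB EC c) $ j)"
    using j by simp
  then show "active_comb EB EC p $ j = vsum n {..<Suc (length EB + length EC)} (\<lambda>c. p $ c \<cdot>\<^sub>v active_point EB EC c) $ j"
    using j unfolding sum_lessThan_Suc_add
    by (auto simp: active_comb_def active_point_def nth_x2_carrier[OF EB] nth_x3_carrier[OF EC])
qed simp

lemma Abar_mult_vec:
  assumes EB: "set EB \<subseteq> {..<l2}" and EC: "set EC \<subseteq> {..<l3}"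
    and p: "p \<in> carrier_vec (Suc (length EB + length EC))" and r: "r < Suc (length EB + length EC)"
  shows "(Abar A \<delta> (mat_of_rows n (map x2 EB)) (mat_of_rows n (map x3 EC)) *\<^sub>v p) $ r =
    (if r = 0 then real l1 * p $ 0 + (\<Sum>j<length EB. p $ Suc j) + (\<Sum>j<length EC. p $ Suc (length EB + j))
       - u \<bullet> (As *\<^sub>v active_comb EB EC p)
     else active_point EB EC r \<bullet> (As *\<^sub>v active_comb EB EC p) - p $ 0)"
proof -
  define N where "N = Suc (length EB + length EC)"
  define g where "g = active_point EB EC"
  have comb: "q \<bullet> (As *\<^sub>v active_comb EB EC p) = (\<Sum>c<N. p $ c * (q \<bullet> (As *\<^sub>v g c)))" for q
    unfolding active_comb_eq_vsum[OF EB EC] N_def g_def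
    by (rule scalar_prod_mult_mat_vec_vsum[OF As_carrier(1)]) (use active_point_carrier[OF EB EC] in auto)
  have "(Abar A \<delta> (mat_of_rows n (map x2 EB)) (mat_of_rows n (map x3 EC)) *\<^sub>v p) $ r
      = (\<Sum>c<N. Abar A \<delta> (mat_of_rows n (map x2 EB)) (mat_of_rows n (map x3 EC)) $$ (r, c) * p $ c)"
    using Abar_carrier p r unfolding N_def by (rule index_mult_mat_vec_sum)
  also have "\<dots> = (if r = 0 then (\<Sum>c<N. (if c = 0 then real l1 else 1) * p $ c) - (\<Sum>c<N. p $ c * (u \<bullet> (As *\<^sub>v g c)))
       else (\<Sum>c<N. p $ c * (g r \<bullet> (As *\<^sub>v g c))) - p $ 0)"
    using r unfolding N_def g_def
    by (auto simp: Abar_index[OF EB EC] algebra_simps sum_subtractf sum.distrib sum.lessThan_Suc_shift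
        simp del: sum.lessThan_Suc intro!: sum.cong)
  finally show ?thesis
    unfolding comb N_def g_def by (simp add: sum_lessThan_Suc_add del: sum.lessThan_Suc)
qed

lemma active_comb_smult:
  assumes EB: "set EB \<subseteq> {..<l2}" and EC: "set EC \<subseteq> {..<l3}"
    and p: "p \<in> carrier_vec (Suc (length EB + length EC))"
  shows "active_comb EB EC (k \<cdot>\<^sub>v p) = k \<cdot>\<^sub>v active_comb EB EC p"
proof (rule eq_vecI)
  fix j assume "j < dim_vec (k \<cdot>\<^sub>v active_comb EB EC p)"
  then have "j < n" by simp
  then show "active_comb EB EC (k \<cdot>\<^sub>v p) $ j = (k \<cdot>\<^sub>v active_comb EB EC p) $ j"
    using p by (simp add: active_comb_def sum_distrib_left algebra_simps
        nth_x2_carrier(2)[OF EB] nth_x3_carrier(2)[OF EC])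
qed simp

definition active_coords :: "nat list \<Rightarrow> nat list \<Rightarrow> real \<Rightarrow> (nat \<Rightarrow> real) \<Rightarrow> (nat \<Rightarrow> real) \<Rightarrow> real vec" where
  "active_coords EB EC a0 \<alpha> \<beta> = vec (Suc (length EB + length EC))
     (\<lambda>c. if c = 0 then a0 else if c \<le> length EB then \<alpha> (EB ! (c - 1)) else \<beta> (EC ! (c - Suc (length EB))))"

lemma active_coords_carrier [simp]:
  "active_coords EB EC a0 \<alpha> \<beta> \<in> carrier_vec (Suc (length EB + length EC))"
  "dim_vec (active_coords EB EC a0 \<alpha> \<beta>) = Suc (length EB + length EC)"
  by (simp_all add: active_coords_def)

lemma index_active_coords [simp]:
  "active_coords EB EC a0 \<alpha> \<beta> $ 0 = a0"
  "t < length EB \<Longrightarrow> active_coords EB EC a0 \<alpha> \<beta> $ Suc t = \<alpha> (EB ! t)"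
  "t < length EC \<Longrightarrow> active_coords EB EC a0 \<alpha> \<beta> $ Suc (length EB + t) = \<beta> (EC ! t)"
  by (simp_all add: active_coords_def)

lemma active_point_residual:
  assumes lam: "lam \<noteq> 0"
    and EB: "set EB = E_B (f lam a0 \<alpha> \<beta>) x2 l2" and EC: "set EC = E_C \<epsilon> (f lam a0 \<alpha> \<beta>) x3 l3"
    and r: "0 < r" "r < Suc (length EB + length EC)"
  shows "active_point EB EC r \<bullet> (As *\<^sub>v dual_sum a0 \<alpha> \<beta>) - a0 = lam * bbar \<epsilon> (length EB) (length EC) $ r"
proof -
  have margin: "x \<bullet> (As *\<^sub>v dual_sum a0 \<alpha> \<beta>) - a0 = lam * t"
    if "x \<in> carrier_vec n" "- f lam a0 \<alpha> \<beta> x = t" for x t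
  proof -
    have "(x \<bullet> (As *\<^sub>v dual_sum a0 \<alpha> \<beta>) - a0) / lam = t"
      using that f1_eq[OF that(1) lam] by (simp add: minus_divide_left)
    then show ?thesis
      using lam by (simp add: divide_eq_eq mult.commute)
  qed
  show ?thesis
  proof (cases "r \<le> length EB")
    case True
    then have "r - 1 < length EB" using r by linarith
    then have "EB ! (r - 1) \<in> E_B (f lam a0 \<alpha> \<beta>) x2 l2"
      using EB nth_mem by blast
    then show ?thesis
      using True r x2_carrier margin by (auto simp: E_B_def active_point_def index_bbar)
  next
    case False
    then have "r - Suc (length EB) < length EC" using r by linarith
    then have "EC ! (r - Suc (length EB)) \<in> E_C \<epsilon> (f lam a0 \<alpha> \<beta>) x3 l3"
      using EC nth_mem by blast
    then show ?thesis
      using False r x3_carrier margin by (auto simp: E_C_def active_point_def index_bbar)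
  qed
qed

context
  fixes EB EC :: "nat list" and a0 a0' :: real and \<alpha> \<alpha>' \<beta> \<beta>' :: "nat \<Rightarrow> real"
  assumes EB: "distinct EB" "set EB \<subseteq> {..<l2}" and EC: "distinct EC" "set EC \<subseteq> {..<l3}"
    and \<alpha>_inactive: "\<And>i. i < l2 \<Longrightarrow> i \<notin> set EB \<Longrightarrow> \<alpha> i = \<alpha>' i"
    and \<beta>_inactive: "\<And>k. k < l3 \<Longrightarrow> k \<notin> set EC \<Longrightarrow> \<beta> k = \<beta>' k"
begin

lemma dual_sum_diff:
  "dual_sum a0 \<alpha> \<beta> - dual_sum a0' \<alpha>' \<beta>' =
    active_comb EB EC (active_coords EB EC a0 \<alpha> \<beta> - active_coords EB EC a0' \<alpha>' \<beta>')"
proof (rule eq_vecI)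
  define d where "d = active_coords EB EC a0 \<alpha> \<beta> - active_coords EB EC a0' \<alpha>' \<beta>'"
  fix j assume "j < dim_vec (active_comb EB EC d)"
  then have j: "j < n" by simp
  have "active_comb EB EC d $ j = d $ 0 * u $ j + (\<Sum>t<length EB. d $ Suc t * x2 (EB ! t) $ j)
      + (\<Sum>t<length EC. d $ Suc (length EB + t) * x3 (EC ! t) $ j)"
    using j by (simp add: active_comb_def nth_x2_carrier(2)[OF EB(2)] nth_x3_carrier(2)[OF EC(2)])
  also have "\<dots> = (a0 - a0') * u $ j + (\<Sum>i<l2. (\<alpha> i - \<alpha>' i) * x2 i $ j) + (\<Sum>k<l3. (\<beta> k - \<beta>' k) * x3 k $ j)"
  proof -
    have "(\<Sum>i<l2. (\<alpha> i - \<alpha>' i) * x2 i $ j) = (\<Sum>t<length EB. (\<alpha> (EB ! t) - \<alpha>' (EB ! t)) * x2 (EB ! t) $ j)"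
      using EB \<alpha>_inactive by (intro sum_lessThan_eq_sum_nth) auto
    moreover have "(\<Sum>k<l3. (\<beta> k - \<beta>' k) * x3 k $ j) = (\<Sum>t<length EC. (\<beta> (EC ! t) - \<beta>' (EC ! t)) * x3 (EC ! t) $ j)"
      using EC \<beta>_inactive by (intro sum_lessThan_eq_sum_nth) auto
    ultimately show ?thesis
      by (simp add: d_def)
  qed
  also have "\<dots> = (dual_sum a0 \<alpha> \<beta> - dual_sum a0' \<alpha>' \<beta>') $ j"
    using j by (simp add: dual_sum_def algebra_simps sum_subtractf)
  finally show "(dual_sum a0 \<alpha> \<beta> - dual_sum a0' \<alpha>' \<beta>') $ j = active_comb EB EC d $ j" ..
qed simp

lemma multiplier_sum_diff:
  "(\<Sum>j<length EB. (active_coords EB EC a0 \<alpha> \<beta> - active_coords EB EC a0' \<alpha>' \<beta>') $ Suc j)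
   + (\<Sum>j<length EC. (active_coords EB EC a0 \<alpha> \<beta> - active_coords EB EC a0' \<alpha>' \<beta>') $ Suc (length EB + j))
   = ((\<Sum>i<l2. \<alpha> i) + (\<Sum>k<l3. \<beta> k)) - ((\<Sum>i<l2. \<alpha>' i) + (\<Sum>k<l3. \<beta>' k))"
proof -
  have "(\<Sum>i<l2. \<alpha> i - \<alpha>' i) = (\<Sum>t<length EB. \<alpha> (EB ! t) - \<alpha>' (EB ! t))"
    using EB \<alpha>_inactive by (intro sum_lessThan_eq_sum_nth) auto
  moreover have "(\<Sum>k<l3. \<beta> k - \<beta>' k) = (\<Sum>t<length EC. \<beta> (EC ! t) - \<beta>' (EC ! t))"
    using EC \<beta>_inactive by (intro sum_lessThan_eq_sum_nth) auto
  ultimately show ?thesis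
    by (simp add: sum_subtractf)
qed

end

lemma w1_f1_shift:
  assumes nz: "lam \<noteq> 0" "mu \<noteq> 0" and h: "h \<in> carrier_vec n"
    and S: "dual_sum a0 \<alpha> \<beta> - dual_sum a0' \<alpha>' \<beta>' = (lam - mu) \<cdot>\<^sub>v h"
    and a0: "a0 = a0' - (mu - lam) * t"
  shows "w1 A \<delta> x2 l2 x3 l3 lam a0 \<alpha> \<beta> = (mu / lam) \<cdot>\<^sub>v (w1 A \<delta> x2 l2 x3 l3 mu a0' \<alpha>' \<beta>' + As *\<^sub>v h) - As *\<^sub>v h"
      (is "?W = ?W'")
    and "x \<in> carrier_vec n \<Longrightarrow>
      f lam a0 \<alpha> \<beta> x = (mu / lam) * (f mu a0' \<alpha>' \<beta>' x - (t - x \<bullet> (As *\<^sub>v h))) + (t - x \<bullet> (As *\<^sub>v h))"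
      (is "_ \<Longrightarrow> ?F = ?F'")
proof -
  have "As *\<^sub>v dual_sum a0 \<alpha> \<beta> - As *\<^sub>v dual_sum a0' \<alpha>' \<beta>' = As *\<^sub>v (dual_sum a0 \<alpha> \<beta> - dual_sum a0' \<alpha>' \<beta>')"
    by (rule mult_minus_distrib_mat_vec[of _ n n, symmetric]) simp_all
  also have "\<dots> = (lam - mu) \<cdot>\<^sub>v (As *\<^sub>v h)"
    unfolding S by (rule mult_mat_vec[of _ n n]) (simp_all add: h)
  finally have AS: "As *\<^sub>v dual_sum a0 \<alpha> \<beta> - As *\<^sub>v dual_sum a0' \<alpha>' \<beta>' = (lam - mu) \<cdot>\<^sub>v (As *\<^sub>v h)" .
  show "?W = ?W'"
  proof (rule eq_vecI)
    fix j assume "j < dim_vec ?W'"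
    then have j: "j < n" by simp
    have "(As *\<^sub>v dual_sum a0 \<alpha> \<beta>) $ j = (As *\<^sub>v dual_sum a0' \<alpha>' \<beta>') $ j + (lam - mu) * (As *\<^sub>v h) $ j"
      using arg_cong[OF AS, of "\<lambda>v. v $ j"] j by simp
    moreover have "- (1 / lam) * (P' + (lam - mu) * H) = (mu / lam) * (- (1 / mu) * P' + H) - H" for P' H
      using nz by (simp add: field_simps)
    ultimately show "?W $ j = ?W' $ j"
      using j by (simp add: w1_eq del: index_mult_mat_vec)
  qed (simp add: w1_eq)
  assume x: "x \<in> carrier_vec n"
  have xS: "x \<bullet> (As *\<^sub>v dual_sum a0 \<alpha> \<beta>) = x \<bullet> (As *\<^sub>v dual_sum a0' \<alpha>' \<beta>') + (lam - mu) * (x \<bullet> (As *\<^sub>v h))"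
    using arg_cong[OF AS, of "\<lambda>v. x \<bullet> v"] x by (simp add: scalar_prod_minus_distrib[of _ n])
  have "(a0' - (mu - lam) * t - (P' + (lam - mu) * H)) / lam = (mu / lam) * ((a0' - P') / mu - (t - H)) + (t - H)"
    for P' H
    using nz by (simp add: field_simps)
  then show "?F = ?F'"
    unfolding f1_eq[OF x nz(1)] f1_eq[OF x nz(2)] xS by (simp add: a0)
qed

context
  fixes lam mu a0 a0' :: real and \<alpha> \<alpha>' \<beta> \<beta>' :: "nat \<Rightarrow> real" and EB EC :: "nat list"
  assumes kkt: "kkt lam a0 \<alpha> \<beta>" "kkt mu a0' \<alpha>' \<beta>'"
    and same: "same_index_sets (f lam a0 \<alpha> \<beta>) (f mu a0' \<alpha>' \<beta>')"
    and EB: "distinct EB" "set EB = E_B (f mu a0' \<alpha>' \<beta>') x2 l2"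
    and EC: "distinct EC" "set EC = E_C \<epsilon> (f mu a0' \<alpha>' \<beta>') x3 l3"
begin

lemma active_lists_subset: "set EB \<subseteq> {..<l2}" "set EC \<subseteq> {..<l3}"
  using EB EC by (auto simp: E_B_def E_C_def)

lemma inactive_multipliers_eq:
  "i < l2 \<Longrightarrow> i \<notin> set EB \<Longrightarrow> \<alpha> i = \<alpha>' i" "k < l3 \<Longrightarrow> k \<notin> set EC \<Longrightarrow> \<beta> k = \<beta>' k"
  using kkt_inactive_alpha_eq[OF kkt same] kkt_inactive_beta_eq[OF kkt same] EB EC by simp_all

lemmas active_dual_sum_diff = dual_sum_diff[OF EB(1) active_lists_subset(1) EC(1) active_lists_subset(2)
    inactive_multipliers_eq]

lemma Abar_mult_active_coords_diff:
  assumes nz: "lam \<noteq> 0" "mu \<noteq> 0"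
  shows "Abar A \<delta> (mat_of_rows n (map x2 EB)) (mat_of_rows n (map x3 EC))
      *\<^sub>v (active_coords EB EC a0 \<alpha> \<beta> - active_coords EB EC a0' \<alpha>' \<beta>')
    = (lam - mu) \<cdot>\<^sub>v bbar \<epsilon> (length EB) (length EC)"
proof -
  define M where "M = Abar A \<delta> (mat_of_rows n (map x2 EB)) (mat_of_rows n (map x3 EC))"
  define d where "d = active_coords EB EC a0 \<alpha> \<beta> - active_coords EB EC a0' \<alpha>' \<beta>'"
  note EB_sub = active_lists_subset(1) and EC_sub = active_lists_subset(2)
  have EB_lam: "set EB = E_B (f lam a0 \<alpha> \<beta>) x2 l2" and EC_lam: "set EC = E_C \<epsilon> (f lam a0 \<alpha> \<beta>) x3 l3"
    using EB EC same by (simp_all add: same_index_sets_def)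
  have comb: "active_comb EB EC d = dual_sum a0 \<alpha> \<beta> - dual_sum a0' \<alpha>' \<beta>'"
    unfolding d_def by (rule active_dual_sum_diff[symmetric])
  have sums: "(\<Sum>j<length EB. d $ Suc j) + (\<Sum>j<length EC. d $ Suc (length EB + j))
      = ((\<Sum>i<l2. \<alpha> i) + (\<Sum>k<l3. \<beta> k)) - ((\<Sum>i<l2. \<alpha>' i) + (\<Sum>k<l3. \<beta>' k))"
    unfolding d_def by (rule multiplier_sum_diff[OF EB(1) EB_sub EC(1) EC_sub inactive_multipliers_eq])
  have d: "d \<in> carrier_vec (Suc (length EB + length EC))" and d0: "d $ 0 = a0 - a0'"
    unfolding d_def by simp_all
  have "M *\<^sub>v d = (lam - mu) \<cdot>\<^sub>v bbar \<epsilon> (length EB) (length EC)"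
    \<comment> \<open>row 0 is the difference of the two conditions (c), row r > 0 that of the two active margins\<close>
  proof (rule eq_vecI)
    fix r assume "r < dim_vec ((lam - mu) \<cdot>\<^sub>v bbar \<epsilon> (length EB) (length EC))"
    then have r: "r < Suc (length EB + length EC)"
      by (simp add: bbar_carrier)
    show "(M *\<^sub>v d) $ r = ((lam - mu) \<cdot>\<^sub>v bbar \<epsilon> (length EB) (length EC)) $ r"
    proof (cases "r = 0")
      case True
      have "u \<bullet> (As *\<^sub>v active_comb EB EC d) = u \<bullet> (As *\<^sub>v dual_sum a0 \<alpha> \<beta>) - u \<bullet> (As *\<^sub>v dual_sum a0' \<alpha>' \<beta>')"
        by (simp add: comb mult_minus_distrib_mat_vec[of _ n n] scalar_prod_minus_distrib[of _ n])
      then show ?thesis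
        using True r kkt_stationarity[OF kkt(1)] kkt_stationarity[OF kkt(2)]
        unfolding M_def Abar_mult_vec[OF EB_sub EC_sub d r]
        by (simp add: add.assoc sums d0 index_bbar bbar_carrier right_diff_distrib)
    next
      case False
      have g: "active_point EB EC r \<in> carrier_vec n"
        using active_point_carrier[OF EB_sub EC_sub r] .
      have "active_point EB EC r \<bullet> (As *\<^sub>v active_comb EB EC d)
          = active_point EB EC r \<bullet> (As *\<^sub>v dual_sum a0 \<alpha> \<beta>) - active_point EB EC r \<bullet> (As *\<^sub>v dual_sum a0' \<alpha>' \<beta>')"
        by (simp add: comb mult_minus_distrib_mat_vec[of _ n n] scalar_prod_minus_distrib[OF g])
      then show ?thesis
        using False r active_point_residual[OF nz(1) EB_lam EC_lam _ r] active_point_residual[OF nz(2) EB(2) EC(2) _ r]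
        unfolding M_def Abar_mult_vec[OF EB_sub EC_sub d r]
        by (simp add: d0 bbar_carrier algebra_simps)
    qed
  qed (simp add: M_def Abar_dim(1) bbar_carrier)
  then show ?thesis
    unfolding M_def d_def .
qed

lemma active_coords_diff_solution:
  assumes nz: "lam \<noteq> 0" "mu \<noteq> 0"
    and inv: "invertible_mat (Abar A \<delta> (mat_of_rows n (map x2 EB)) (mat_of_rows n (map x3 EC)))"
  defines "\<theta> \<equiv> mat_inv (Abar A \<delta> (mat_of_rows n (map x2 EB)) (mat_of_rows n (map x3 EC)))
      *\<^sub>v bbar \<epsilon> (length EB) (length EC)"
  shows "active_coords EB EC a0 \<alpha> \<beta> - active_coords EB EC a0' \<alpha>' \<beta>' = (lam - mu) \<cdot>\<^sub>v \<theta>"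
    and "dual_sum a0 \<alpha> \<beta> - dual_sum a0' \<alpha>' \<beta>' = (lam - mu) \<cdot>\<^sub>v active_comb EB EC \<theta>"
proof -
  have M: "Abar A \<delta> (mat_of_rows n (map x2 EB)) (mat_of_rows n (map x3 EC))
      \<in> carrier_mat (Suc (length EB + length EC)) (Suc (length EB + length EC))"
    by (rule Abar_carrier)
  show coords: "active_coords EB EC a0 \<alpha> \<beta> - active_coords EB EC a0' \<alpha>' \<beta>' = (lam - mu) \<cdot>\<^sub>v \<theta>"
    using mat_inv_mult_vec_unique[OF inv M _ Abar_mult_active_coords_diff[OF nz]] M mat_inv_inverts[OF inv]
    by (simp add: \<theta>_def mult_mat_vec bbar_carrier)
  have \<theta>: "\<theta> \<in> carrier_vec (Suc (length EB + length EC))"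
    using M mat_inv_inverts[OF inv] by (simp add: \<theta>_def carrier_vecI)
  have "dual_sum a0 \<alpha> \<beta> - dual_sum a0' \<alpha>' \<beta>' = active_comb EB EC ((lam - mu) \<cdot>\<^sub>v \<theta>)"
    by (simp add: active_dual_sum_diff coords)
  also have "\<dots> = (lam - mu) \<cdot>\<^sub>v active_comb EB EC \<theta>"
    by (rule active_comb_smult[OF active_lists_subset \<theta>])
  finally show "dual_sum a0 \<alpha> \<beta> - dual_sum a0' \<alpha>' \<beta>' = (lam - mu) \<cdot>\<^sub>v active_comb EB EC \<theta>" .
qed

lemma path_segment_formulas:
  assumes nz: "lam \<noteq> 0" "mu \<noteq> 0"
    and inv: "invertible_mat (Abar A \<delta> (mat_of_rows n (map x2 EB)) (mat_of_rows n (map x3 EC)))"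
    and \<theta>_def: "\<theta> = mat_inv (Abar A \<delta> (mat_of_rows n (map x2 EB)) (mat_of_rows n (map x3 EC)))
      *\<^sub>v bbar \<epsilon> (length EB) (length EC)"
    and h1_def: "h1 = As *\<^sub>v active_comb EB EC \<theta>"
  shows "a0 = a0' - (mu - lam) * \<theta> $ 0 \<and>
    (\<forall>j<length EB. \<alpha> (EB ! j) = \<alpha>' (EB ! j) - (mu - lam) * \<theta> $ (1 + j)) \<and>
    (\<forall>j<length EC. \<beta> (EC ! j) = \<beta>' (EC ! j) - (mu - lam) * \<theta> $ (1 + length EB + j)) \<and>
    w1 A \<delta> x2 l2 x3 l3 lam a0 \<alpha> \<beta> = (mu / lam) \<cdot>\<^sub>v (w1 A \<delta> x2 l2 x3 l3 mu a0' \<alpha>' \<beta>' + h1) - h1 \<and>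
    (\<forall>x\<in>carrier_vec n.
      f lam a0 \<alpha> \<beta> x = (mu / lam) * (f mu a0' \<alpha>' \<beta>' x - (\<theta> $ 0 - x \<bullet> h1)) + (\<theta> $ 0 - x \<bullet> h1))"
proof -
  note sol = active_coords_diff_solution[OF nz inv, folded \<theta>_def]
  have \<theta>: "dim_vec \<theta> = Suc (length EB + length EC)"
    using mat_inv_inverts(1)[OF inv] by (simp add: \<theta>_def Abar_dim)
  have coord: "(active_coords EB EC a0 \<alpha> \<beta> - active_coords EB EC a0' \<alpha>' \<beta>') $ c = (lam - mu) * \<theta> $ c"
    if "c < Suc (length EB + length EC)" for c
    using sol(1) that \<theta> by simp
  have a0: "a0 = a0' - (mu - lam) * \<theta> $ 0"
    using coord[of 0] by (simp add: algebra_simps)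
  have "\<forall>j<length EB. \<alpha> (EB ! j) = \<alpha>' (EB ! j) - (mu - lam) * \<theta> $ (1 + j)"
  proof (intro allI impI)
    fix j assume "j < length EB"
    then show "\<alpha> (EB ! j) = \<alpha>' (EB ! j) - (mu - lam) * \<theta> $ (1 + j)"
      using coord[of "Suc j"] by (simp add: algebra_simps)
  qed
  moreover have "\<forall>j<length EC. \<beta> (EC ! j) = \<beta>' (EC ! j) - (mu - lam) * \<theta> $ (1 + length EB + j)"
  proof (intro allI impI)
    fix j assume "j < length EC"
    then have "\<beta> (EC ! j) - \<beta>' (EC ! j) = (lam - mu) * \<theta> $ Suc (length EB + j)"
      using coord[of "Suc (length EB + j)"] by simp
    then show "\<beta> (EC ! j) = \<beta>' (EC ! j) - (mu - lam) * \<theta> $ (1 + length EB + j)"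
      by (simp add: algebra_simps)
  qed
  ultimately show ?thesis
    using a0 w1_f1_shift[OF nz active_comb_carrier(1) sol(2) a0] by (simp add: h1_def)
qed

end

end

theorem theorem1:
  fixes A :: "real mat" and x2 x3 :: "nat \<Rightarrow> real vec" and l2 l3 :: nat
    and \<epsilon> \<delta> :: "real"
    and a0 :: "real \<Rightarrow> real" and \<alpha> \<beta> :: "real \<Rightarrow> nat \<Rightarrow> real"
    and lam_l lam_l1 :: real
  assumes l1_pos: "dim_row A \<ge> 1"
    and x2_dim: "\<forall>i<l2. x2 i \<in> carrier_vec (dim_col A)"
    and x3_dim: "\<forall>k<l3. x3 k \<in> carrier_vec (dim_col A)"
    and eps: "0 < \<epsilon>" "\<epsilon> < 1"
    and delta: "0 < \<delta>"
    and path: "\<forall>lam>0. kkt_QPP1 A \<delta> \<epsilon> x2 l2 x3 l3 lam (a0 lam) (\<alpha> lam) (\<beta> lam)"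
    and lams: "0 < lam_l1" "lam_l1 < lam_l"
    and const: "\<forall>lam\<in>{lam_l1<..lam_l}.
       (let F = f1 A \<delta> x2 l2 x3 l3 lam (a0 lam) (\<alpha> lam) (\<beta> lam);
            Fl = f1 A \<delta> x2 l2 x3 l3 lam_l (a0 lam_l) (\<alpha> lam_l) (\<beta> lam_l) in
        E_B F x2 l2 = E_B Fl x2 l2 \<and> L_B F x2 l2 = L_B Fl x2 l2 \<and> R_B F x2 l2 = R_B Fl x2 l2 \<and>
        E_C \<epsilon> F x3 l3 = E_C \<epsilon> Fl x3 l3 \<and> L_C \<epsilon> F x3 l3 = L_C \<epsilon> Fl x3 l3 \<and>
        R_C \<epsilon> F x3 l3 = R_C \<epsilon> Fl x3 l3)"
    and inv: "let Fl = f1 A \<delta> x2 l2 x3 l3 lam_l (a0 lam_l) (\<alpha> lam_l) (\<beta> lam_l);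
                  EB = sorted_list_of_set (E_B Fl x2 l2); EC = sorted_list_of_set (E_C \<epsilon> Fl x3 l3);
                  XB = mat_of_rows (dim_col A) (map x2 EB); XC = mat_of_rows (dim_col A) (map x3 EC)
              in invertible_mat (Abar A \<delta> XB XC)"
  shows "let n = dim_col A; l1 = dim_row A;
             F = (\<lambda>lam. f1 A \<delta> x2 l2 x3 l3 lam (a0 lam) (\<alpha> lam) (\<beta> lam));
             W = (\<lambda>lam. w1 A \<delta> x2 l2 x3 l3 lam (a0 lam) (\<alpha> lam) (\<beta> lam));
             EB = sorted_list_of_set (E_B (F lam_l) x2 l2);
             EC = sorted_list_of_set (E_C \<epsilon> (F lam_l) x3 l3);
             m1 = length EB; m2 = length EC;
             XB = mat_of_rows n (map x2 EB); XC = mat_of_rows n (map x3 EC);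
             \<theta> = mat_inv (Abar A \<delta> XB XC) *\<^sub>v bbar \<epsilon> m1 m2;
             h1 = Astar A \<delta> *\<^sub>v (\<theta> $ 0 \<cdot>\<^sub>v (transpose_mat A *\<^sub>v ones l1)
                    + vsum n {..<m1} (\<lambda>j. \<theta> $ (1 + j) \<cdot>\<^sub>v x2 (EB ! j))
                    + vsum n {..<m2} (\<lambda>j. \<theta> $ (1 + m1 + j) \<cdot>\<^sub>v x3 (EC ! j)));
             h2 = (\<lambda>x. \<theta> $ 0 - x \<bullet> h1)
         in \<forall>lam. lam_l1 < lam \<and> lam < lam_l \<longrightarrow>
              a0 lam = a0 lam_l - (lam_l - lam) * \<theta> $ 0 \<and>
              (\<forall>j<m1. \<alpha> lam (EB ! j) = \<alpha> lam_l (EB ! j) - (lam_l - lam) * \<theta> $ (1 + j)) \<and>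
              (\<forall>j<m2. \<beta> lam (EC ! j) = \<beta> lam_l (EC ! j) - (lam_l - lam) * \<theta> $ (1 + m1 + j)) \<and>
              W lam = (lam_l / lam) \<cdot>\<^sub>v (W lam_l + h1) - h1 \<and>
              (\<forall>x\<in>carrier_vec n. F lam x = (lam_l / lam) * (F lam_l x - h2 x) + h2 x)"
proof -
  interpret qpp1 A \<delta> \<epsilon> x2 x3 l2 l3
    using delta x2_dim x3_dim by unfold_locales auto
  define Fl where "Fl = f lam_l (a0 lam_l) (\<alpha> lam_l) (\<beta> lam_l)"
  define EB where "EB = sorted_list_of_set (E_B Fl x2 l2)"
  define EC where "EC = sorted_list_of_set (E_C \<epsilon> Fl x3 l3)"
  have EB: "distinct EB" "set EB = E_B Fl x2 l2" and EC: "distinct EC" "set EC = E_C \<epsilon> Fl x3 l3"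
    by (simp_all add: EB_def EC_def E_B_def E_C_def)
  have inv_l: "invertible_mat (Abar A \<delta> (mat_of_rows n (map x2 EB)) (mat_of_rows n (map x3 EC)))"
    using inv by (simp add: EB_def EC_def Fl_def Let_def)
  show ?thesis
    unfolding Let_def Fl_def[symmetric] EB_def[symmetric] EC_def[symmetric]
  proof (intro allI impI, goal_cases)
    case (1 lam)
    then have kkt: "kkt lam (a0 lam) (\<alpha> lam) (\<beta> lam)" "kkt lam_l (a0 lam_l) (\<alpha> lam_l) (\<beta> lam_l)"
      using path lams by auto
    from 1 have "lam \<in> {lam_l1<..lam_l}"
      by simp
    from const[rule_format, OF this] have "same_index_sets (f lam (a0 lam) (\<alpha> lam) (\<beta> lam)) Fl"
      unfolding same_index_sets_def Fl_def Let_def .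
    moreover have "lam \<noteq> 0" "lam_l \<noteq> 0"
      using 1 lams by auto
    ultimately show ?case
      using path_segment_formulas[OF kkt _ EB[unfolded Fl_def] EC[unfolded Fl_def] _ _ inv_l refl refl]
      unfolding Fl_def active_comb_def by blast
  qed
qed

end
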